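(* Let $K\ge1$, let $\mathbf{\Phi}\in\mathbb{R}^{m\times n}$ satisfy the RIP of order $2K$ with $\delta:=\delta_{2K}\in(0,1)$. Let $\mathbf{x}\in\mathbb{R}^n$ with $\mathcal{T}=\mathrm{supp}(\mathbf{x})$, $|\mathcal{T}|=K$, let $\kappa:=\max_{i,j\in\mathcal{T}}|x_i|/|x_j|$, let $\mathbf{v}\in\mathbb{R}^m$, $\mathbf{y}=\mathbf{\Phi}\mathbf{x}+\mathbf{v}$, and assume $\mathrm{SNR}\ge\kappa^2\delta^{-3/2}$. Then for every $0\le k\le K-\lceil\delta^{1/2}K\rceil$ (with $k<K$), the OMP residuals satisfy $$\|\mathbf{r}^k\|_2^2-\|\mathbf{r}^{k+1}\|_2^2 \ge (1-7\delta^{1/2})\,\bigl(x^k_{\delta^{1/2}}\bigr)^2.$$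
   Context: $\phi_i$ is the $i$-th column of $\mathbf{\Phi}$. RIP: for an integer $s\ge1$, the isometry constant $\delta_s$ of $\mathbf{\Phi}$ is the smallest $c\in[0,1)$ such that $(1-c)\|\mathbf{z}\|_2^2 \le \|\mathbf{\Phi}\mathbf{z}\|_2^2 \le (1+c)\|\mathbf{z}\|_2^2$ for all $s$-sparse $\mathbf{z}$. $\mathrm{SNR} := \|\mathbf{\Phi}\mathbf{x}\|_2^2/\|\mathbf{v}\|_2^2$. OMP with input $\mathbf{\Phi},\mathbf{y},K$: set $\mathcal{T}^0=\emptyset$, $\mathbf{r}^0=\mathbf{y}$; for $k=1,\dots,K$: choose $t^k \in \arg\max_{i\notin\mathcal{T}^{k-1}} |\langle\phi_i,\mathbf{r}^{k-1}\rangle|$ (ties arbitrary), set $\mathcal{T}^k=\mathcal{T}^{k-1}\cup\{t^k\}$, $\mathbf{x}^k = \arg\min_{\mathrm{supp}(\mathbf{u})\subseteq\mathcal{T}^k}\|\mathbf{y}-\mathbf{\Phi}\mathbf{u}\|_2$, $\mathbf{r}^k=\mathbf{y}-\mathbf{\Phi}\mathbf{x}^k$. For $0\le k\le K$: $\Gamma^k:=\mathcal{T}\setminus\mathcal{T}^k$; for $\tau\in(0,1]$, $x^k_\tau$ denotes the magnitude of the $\lceil\tau K\rceil$-th largest entry (in magnitude) of $\mathbf{x}_{\Gamma^k}$, with $x^k_\tau:=0$ if $\lceil\tau K\rceil>|\Gamma^k|$. *)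

theory Defs
  imports "HOL-Analysis.Analysis" "HOL-Library.Multiset"
begin

definition supp :: "real ^ 'n \<Rightarrow> 'n set" where
  "supp z = {i. z $ i \<noteq> 0}"

definition sparse :: "nat \<Rightarrow> real ^ 'n \<Rightarrow> bool" where
  "sparse s z \<longleftrightarrow> card (supp z) \<le> s"

definition col :: "real ^ 'n ^ 'm \<Rightarrow> 'n \<Rightarrow> real ^ 'm" where
  "col Phi i = (\<chi> r. Phi $ r $ i)"

definition rip_holds :: "real ^ 'n ^ 'm \<Rightarrow> nat \<Rightarrow> real \<Rightarrow> bool" where
  "rip_holds Phi s c \<longleftrightarrow> 0 \<le> c \<and> c < 1 \<and>
     (\<forall>z. sparse s z \<longrightarrow>
        (1 - c) * (norm z)\<^sup>2 \<le> (norm (Phi *v z))\<^sup>2 \<and>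
        (norm (Phi *v z))\<^sup>2 \<le> (1 + c) * (norm z)\<^sup>2)"

definition is_rip_const :: "real ^ 'n ^ 'm \<Rightarrow> nat \<Rightarrow> real \<Rightarrow> bool" where
  "is_rip_const Phi s \<delta> \<longleftrightarrow> rip_holds Phi s \<delta> \<and> (\<forall>c. rip_holds Phi s c \<longrightarrow> \<delta> \<le> c)"

text \<open>A run of OMP with K iterations, selected indices t 1, ..., t K and least-squares
  solutions u 0, ..., u K (with T^k = t ` {1..k}). Ties are resolved arbitrarily,
  i.e. any run satisfying the selection rule is admitted.\<close>
definition omp_run :: "real ^ 'n ^ 'm \<Rightarrow> real ^ 'm \<Rightarrow> nat \<Rightarrow> (nat \<Rightarrow> 'n) \<Rightarrow> (nat \<Rightarrow> real ^ 'n) \<Rightarrow> bool" where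
  "omp_run Phi y K t u \<longleftrightarrow>
     (\<forall>k. 1 \<le> k \<and> k \<le> K \<longrightarrow>
        t k \<notin> t ` {1..<k} \<and>
        (\<forall>i. i \<notin> t ` {1..<k} \<longrightarrow>
           \<bar>col Phi i \<bullet> (y - Phi *v u (k - 1))\<bar> \<le> \<bar>col Phi (t k) \<bullet> (y - Phi *v u (k - 1))\<bar>)) \<and>
     (\<forall>k. k \<le> K \<longrightarrow>
        supp (u k) \<subseteq> t ` {1..k} \<and>
        (\<forall>w. supp w \<subseteq> t ` {1..k} \<longrightarrow> norm (y - Phi *v u k) \<le> norm (y - Phi *v w)))"

definition omp_res :: "real ^ 'n ^ 'm \<Rightarrow> real ^ 'm \<Rightarrow> (nat \<Rightarrow> real ^ 'n) \<Rightarrow> nat \<Rightarrow> real ^ 'm" where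
  "omp_res Phi y u k = y - Phi *v u k"

text \<open>Magnitude of the j-th largest (in magnitude) entry of x restricted to A (j >= 1);
  0 if j exceeds card A.\<close>
definition jth_largest :: "real ^ 'n \<Rightarrow> 'n set \<Rightarrow> nat \<Rightarrow> real" where
  "jth_largest x A j =
     (if 1 \<le> j \<and> j \<le> card A
      then rev (sorted_list_of_multiset (image_mset (\<lambda>i. \<bar>x $ i\<bar>) (mset_set A))) ! (j - 1)
      else 0)"

definition x_tau :: "real ^ 'n \<Rightarrow> nat \<Rightarrow> (nat \<Rightarrow> 'n) \<Rightarrow> nat \<Rightarrow> real \<Rightarrow> real" where
  "x_tau x K t k \<tau> = jth_largest x (supp x - t ` {1..k}) (nat \<lceil>\<tau> * real K\<rceil>)"

definition kappa :: "real ^ 'n \<Rightarrow> real" where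
  "kappa x = Max {\<bar>x $ i\<bar> / \<bar>x $ j\<bar> | i j. i \<in> supp x \<and> j \<in> supp x}"

end

theory Submission
  imports Defs
begin

text \<open>
  Write \<open>e = sqrt \<delta>\<close>, \<open>r\<close> for the residual \<open>r^k\<close>, \<open>g\<close> for its correlation with the column
  selected next, and let \<open>S\<close> collect the \<open>\<lceil>e K\<rceil>\<close> largest entries of \<open>x\<close> outside \<open>T^k\<close>, the
  smallest of them being \<open>a\<close>. Correcting \<open>u^k\<close> along the new column shows that the squared
  residual drops by at least \<open>g\<^sup>2 / (1 + \<delta>)\<close>. The greedy rule bounds \<open>\<langle>\<Phi> x_S, r\<rangle>\<close> above by
  \<open>\<bar>g\<bar> \<parallel>x_S\<parallel>\<^sub>1 \<le> \<bar>g\<bar> \<parallel>x_S\<parallel>\<^sup>2 / a\<close>. Below, write \<open>r = \<Phi> (x - u^k) + v\<close>: the RIP inner-product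
  bound, least-squares optimality of \<open>u^k\<close> (which controls \<open>x - u^k\<close> by \<open>\<Phi> x_\<Gamma>\<close> and \<open>v\<close>) and the SNR
  hypothesis (which makes \<open>\<parallel>v\<parallel>\<close> of order \<open>\<delta> \<parallel>x_S\<parallel>\<close>) give \<open>\<langle>\<Phi> x_S, r\<rangle> \<ge> (1 - 3 e) \<parallel>x_S\<parallel>\<^sup>2\<close>.
  Hence \<open>\<bar>g\<bar> \<ge> (1 - 3 e) a\<close>, and \<open>(1 - 3 e)\<^sup>2 / (1 + e\<^sup>2) \<ge> 1 - 7 e\<close>.
\<close>

lemma rev_sorted_nth_bounds:
  fixes f :: "'a \<Rightarrow> 'b::linorder"
  assumes "finite A" and "j < card A"
  defines "a \<equiv> rev (sorted_list_of_multiset (image_mset f (mset_set A))) ! j"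
  shows "card {i\<in>A. a < f i} \<le> j" and "Suc j \<le> card {i\<in>A. a \<le> f i}"
proof -
  define xs where "xs = rev (sorted_list_of_multiset (image_mset f (mset_set A)))"
  have len: "length xs = card A"
    unfolding xs_def by (metis length_rev mset_sorted_list_of_multiset size_image_mset size_mset size_mset_set)
  have desc: "xs ! q \<le> xs ! p" if "p \<le> q" "q < length xs" for p q
  proof -
    let ?L = "sorted_list_of_multiset (image_mset f (mset_set A))"
    have "?L ! (length ?L - Suc q) \<le> ?L ! (length ?L - Suc p)"
      using that by (intro sorted_nth_mono) (auto simp: xs_def)
    then show ?thesis
      using that by (simp add: xs_def rev_nth)
  qed
  have count: "card {i\<in>A. P (f i)} = card {p. p < length xs \<and> P (xs ! p)}" for P
  proof -
    have "card {i\<in>A. P (f i)} = size (filter_mset P (image_mset f (mset_set A)))"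
      using assms(1) by (simp add: filter_mset_image_mset)
    also have "\<dots> = length (filter P xs)"
      unfolding xs_def by (metis mset_filter mset_rev mset_sorted_list_of_multiset size_mset)
    finally show ?thesis by (simp add: length_filter_conv_card)
  qed
  have "{p. p < length xs \<and> xs ! j < xs ! p} \<subseteq> {..<j}"
    using desc by (auto simp: not_less[symmetric])
  then show "card {i\<in>A. a < f i} \<le> j"
    unfolding count a_def xs_def[symmetric] by (metis card_lessThan card_mono finite_lessThan)
  have "{..j} \<subseteq> {p. p < length xs \<and> xs ! j \<le> xs ! p}"
    using desc assms(2) len by auto
  then show "Suc j \<le> card {i\<in>A. a \<le> f i}"
    unfolding count a_def xs_def[symmetric] by (metis card_atMost card_mono finite_Collect_conjI finite_Collect_less_nat)
qed

lemma jth_largest_top_set: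
  fixes x :: "real ^ 'n"
  assumes "finite A" and "1 \<le> j" and "j \<le> card A"
  obtains S where "S \<subseteq> A" and "card S = j"
    and "\<forall>i\<in>S. jth_largest x A j \<le> \<bar>x $ i\<bar>" and "\<forall>i\<in>A - S. \<bar>x $ i\<bar> \<le> jth_largest x A j"
    and "jth_largest x A j \<in> (\<lambda>i. \<bar>x $ i\<bar>) ` A"
proof -
  let ?f = "\<lambda>i. \<bar>x $ i\<bar>"
  let ?xs = "rev (sorted_list_of_multiset (image_mset ?f (mset_set A)))"
  define a where "a = jth_largest x A j"
  have a: "a = ?xs ! (j - 1)"
    using assms by (simp add: a_def jth_largest_def)
  have "j - 1 < card A"
    using assms by simp
  note bounds = rev_sorted_nth_bounds[OF assms(1) this, of ?f, folded a]
  obtain S where S: "{i\<in>A. a < ?f i} \<subseteq> S" "S \<subseteq> {i\<in>A. a \<le> ?f i}" "card S = j"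
    using exists_subset_between[of "{i\<in>A. a < ?f i}" j "{i\<in>A. a \<le> ?f i}"] bounds assms
    by force
  have "length ?xs = card A"
    by (metis length_rev mset_sorted_list_of_multiset size_image_mset size_mset size_mset_set)
  then have "a \<in> set ?xs"
    unfolding a using assms by (intro nth_mem) simp
  then have "a \<in> ?f ` A"
    using assms(1) by simp
  with S show thesis
    by (intro that[folded a_def]) auto
qed

lemma jth_largest_nonneg: "0 \<le> jth_largest x A j"
proof (cases "1 \<le> j \<and> j \<le> card A")
  case True
  then have "finite A"
    using card_ge_0_finite by fastforce
  with True show ?thesis
    by (metis (no_types, lifting) abs_ge_zero image_iff jth_largest_top_set)
next
  case False
  then show ?thesis
    by (simp only: jth_largest_def if_False order_refl)
qed

definition restrict_vec :: "'n set \<Rightarrow> real ^ 'n \<Rightarrow> real ^ 'n" where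
  "restrict_vec S z = (\<chi> i. if i \<in> S then z $ i else 0)"

lemma supp_restrict_vec: "supp (restrict_vec S z) = S \<inter> supp z"
  by (auto simp: supp_def restrict_vec_def)

lemma diff_restrict_vec: "z - restrict_vec T z = restrict_vec (supp z - T) z"
  by (auto simp: vec_eq_iff supp_def restrict_vec_def)

lemma restrict_vec_supp: "restrict_vec (supp z) z = z"
  by (auto simp: vec_eq_iff supp_def restrict_vec_def)

lemma inner_restrict_vec: "restrict_vec S z \<bullet> w = (\<Sum>i\<in>S. z $ i * w $ i)"
proof -
  have "restrict_vec S z \<bullet> w = (\<Sum>i\<in>UNIV. if i \<in> S then z $ i * w $ i else 0)"
    unfolding inner_vec_def restrict_vec_def by (intro sum.cong) auto
  then show ?thesis
    by (simp add: sum.If_cases)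
qed

lemma power2_norm_restrict_vec: "(norm (restrict_vec S z))\<^sup>2 = (\<Sum>i\<in>S. (z $ i)\<^sup>2)"
  by (simp only: power2_norm_eq_inner inner_restrict_vec) (simp add: restrict_vec_def power2_eq_square)

lemma matrix_vector_mult_axis_one: "Phi *v axis i 1 = col Phi i"
  by (simp add: matrix_vector_mult_basis col_def column_def)

lemma inner_matrix_vector_mult: "(Phi *v z) \<bullet> r = (\<Sum>i\<in>UNIV. z $ i * (col Phi i \<bullet> r))"
proof -
  have "Phi *v z = (\<Sum>i\<in>UNIV. z $ i *\<^sub>R col Phi i)"
    by (simp add: matrix_mult_sum scalar_mult_eq_scaleR col_def column_def)
  then show ?thesis
    by (simp add: inner_sum_left)
qed

lemma inner_matrix_restrict_vec:
  "(Phi *v restrict_vec S z) \<bullet> r = (\<Sum>i\<in>S. z $ i * (col Phi i \<bullet> r))"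
proof -
  have "(Phi *v restrict_vec S z) \<bullet> r = (\<Sum>i\<in>UNIV. if i \<in> S then z $ i * (col Phi i \<bullet> r) else 0)"
    unfolding inner_matrix_vector_mult restrict_vec_def by (intro sum.cong) auto
  then show ?thesis
    by (simp add: sum.If_cases)
qed

lemma supp_add_scaleR: "supp (p + l *\<^sub>R q) \<subseteq> supp p \<union> supp q"
  by (auto simp: supp_def)

lemma sparse_if_supp_subset: "supp (z :: real ^ 'n) \<subseteq> U \<Longrightarrow> card U \<le> s \<Longrightarrow> sparse s z"
  unfolding sparse_def by (meson card_mono finite le_trans)

lemma rip_lower: "rip_holds Phi s c \<Longrightarrow> sparse s z \<Longrightarrow> (1 - c) * (norm z)\<^sup>2 \<le> (norm (Phi *v z))\<^sup>2"
  unfolding rip_holds_def by blast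

lemma rip_upper: "rip_holds Phi s c \<Longrightarrow> sparse s z \<Longrightarrow> (norm (Phi *v z))\<^sup>2 \<le> (1 + c) * (norm z)\<^sup>2"
  unfolding rip_holds_def by blast

lemma rip_power2_norm_col:
  assumes "rip_holds Phi s c" and "1 \<le> s"
  shows "(norm (col Phi i))\<^sup>2 \<le> 1 + c"
proof -
  have "sparse s (axis i (1::real))"
    using assms(2) by (intro sparse_if_supp_subset[of _ "{i}"]) (auto simp: supp_def axis_def)
  from rip_upper[OF assms(1) this] show ?thesis
    by (simp add: matrix_vector_mult_axis_one)
qed

text \<open>Polarisation: apply the two RIP inequalities to a \<plusminus> b', with b' the multiple of b of norm \<open>norm a\<close>.\<close>
lemma rip_inner_lower:
  assumes rip: "rip_holds Phi s c" and card: "card (supp a \<union> supp b) \<le> s"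
  shows "a \<bullet> b - c * norm a * norm b \<le> (Phi *v a) \<bullet> (Phi *v b)"
proof (cases "a = 0 \<or> b = 0")
  case True
  then show ?thesis by auto
next
  case False
  define l where "l = norm a / norm b"
  have l: "l > 0"
    using False by (simp add: l_def)
  have sp: "sparse s (a + m *\<^sub>R b)" for m
    using supp_add_scaleR card by (rule sparse_if_supp_subset)
  have lb: "l * (l * (b \<bullet> b)) = a \<bullet> a"
    using False by (simp add: l_def power2_norm_eq_inner[symmetric] power2_eq_square)
  have "(1 - c) * (norm (a + l *\<^sub>R b))\<^sup>2 \<le> (norm (Phi *v a + l *\<^sub>R (Phi *v b)))\<^sup>2"
    using rip_lower[OF rip sp] by (simp add: matrix_vector_right_distrib matrix_vector_mult_scaleR)
  moreover have "(norm (Phi *v a - l *\<^sub>R (Phi *v b)))\<^sup>2 \<le> (1 + c) * (norm (a - l *\<^sub>R b))\<^sup>2"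
    using rip_upper[OF rip sp[of "-l"]]
    by (simp add: matrix_vector_mult_diff_distrib matrix_vector_mult_scaleR)
  ultimately have "l * (a \<bullet> b) - c * (norm a)\<^sup>2 \<le> l * ((Phi *v a) \<bullet> (Phi *v b))"
    by (simp add: power2_norm_eq_inner inner_commute algebra_simps lb)
  moreover have "(norm a)\<^sup>2 = l * (norm a * norm b)"
    using False by (simp add: l_def power2_eq_square)
  ultimately have "l * (a \<bullet> b - c * norm a * norm b) \<le> l * ((Phi *v a) \<bullet> (Phi *v b))"
    by (simp add: algebra_simps)
  then show ?thesis
    using l by simp
qed

lemma omp_run_supp: "omp_run Phi y K t u \<Longrightarrow> j \<le> K \<Longrightarrow> supp (u j) \<subseteq> t ` {1..j}"
  unfolding omp_run_def by blast

lemma omp_run_res_le: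
  "omp_run Phi y K t u \<Longrightarrow> j \<le> K \<Longrightarrow> supp w \<subseteq> t ` {1..j} \<Longrightarrow>
     norm (omp_res Phi y u j) \<le> norm (y - Phi *v w)"
  unfolding omp_run_def omp_res_def by blast

lemma omp_run_greedy:
  assumes "omp_run Phi y K t u" and "k < K" and "i \<notin> t ` {1..k}"
  shows "\<bar>col Phi i \<bullet> omp_res Phi y u k\<bar> \<le> \<bar>col Phi (t (Suc k)) \<bullet> omp_res Phi y u k\<bar>"
proof -
  note greedy = assms(1)[unfolded omp_run_def, THEN conjunct1, rule_format, THEN conjunct2, rule_format]
  have "1 \<le> Suc k \<and> Suc k \<le> K" and "i \<notin> t ` {1..<Suc k}"
    using assms(2,3) by (auto simp: atLeastLessThanSuc_atLeastAtMost)
  from greedy[OF this] show ?thesis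
    by (simp add: omp_res_def)
qed

text \<open>\<open>u (Suc k)\<close> is at least as good as \<open>u k\<close> corrected along the new column by the step
  \<open>g / (1 + c)\<close>, and the RIP bounds the squared norm of that column by \<open>1 + c\<close>.\<close>
lemma omp_res_decrease:
  assumes run: "omp_run Phi y K t u" and rip: "rip_holds Phi s c" and "1 \<le> s" and "k < K"
  defines "r \<equiv> omp_res Phi y u k" and "g \<equiv> col Phi (t (Suc k)) \<bullet> omp_res Phi y u k"
  shows "g\<^sup>2 / (1 + c) \<le> (norm r)\<^sup>2 - (norm (omp_res Phi y u (Suc k)))\<^sup>2"
proof -
  define \<phi> where "\<phi> = col Phi (t (Suc k))"
  define a where "a = g / (1 + c)"
  have c: "0 \<le> c"
    using rip by (simp add: rip_holds_def)
  have "supp (u k) \<subseteq> t ` {1..Suc k}"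
    using omp_run_supp[OF run, of k] \<open>k < K\<close> by force
  moreover have "supp (axis (t (Suc k)) (1::real)) \<subseteq> t ` {1..Suc k}"
    by (auto simp: supp_def axis_def)
  ultimately have "supp (u k + a *\<^sub>R axis (t (Suc k)) 1) \<subseteq> t ` {1..Suc k}"
    by (intro order_trans[OF supp_add_scaleR Un_least])
  from omp_run_res_le[OF run _ this] \<open>k < K\<close>
  have "norm (omp_res Phi y u (Suc k)) \<le> norm (y - Phi *v (u k + a *\<^sub>R axis (t (Suc k)) 1))"
    by simp
  also have "y - Phi *v (u k + a *\<^sub>R axis (t (Suc k)) 1) = r - a *\<^sub>R \<phi>"
    by (simp add: r_def \<phi>_def omp_res_def matrix_vector_right_distrib matrix_vector_mult_scaleR
        matrix_vector_mult_axis_one)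
  finally have "(norm (omp_res Phi y u (Suc k)))\<^sup>2 \<le> (norm (r - a *\<^sub>R \<phi>))\<^sup>2"
    by (simp add: power_mono)
  also have "\<dots> = (norm r)\<^sup>2 - 2 * a * g + a\<^sup>2 * (norm \<phi>)\<^sup>2"
    unfolding g_def r_def \<phi>_def power2_norm_eq_inner by (simp add: inner_commute algebra_simps power2_eq_square)
  also have "\<dots> \<le> (norm r)\<^sup>2 - 2 * a * g + a\<^sup>2 * (1 + c)"
    using rip_power2_norm_col[OF rip \<open>1 \<le> s\<close>] by (simp add: \<phi>_def mult_left_mono)
  also have "a\<^sup>2 * (1 + c) = a * g"
    using c by (simp add: a_def power2_eq_square)
  also have "(norm r)\<^sup>2 - 2 * a * g + a * g = (norm r)\<^sup>2 - g\<^sup>2 / (1 + c)"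
    by (simp add: a_def power2_eq_square)
  finally show ?thesis
    by simp
qed

lemma card_mult_power2_le_norm_restrict_vec:
  assumes "\<forall>i\<in>S. a \<le> \<bar>x $ i\<bar>" and "0 \<le> a"
  shows "real (card S) * a\<^sup>2 \<le> (norm (restrict_vec S x))\<^sup>2"
proof -
  have "(\<Sum>i\<in>S. a\<^sup>2) \<le> (\<Sum>i\<in>S. (x $ i)\<^sup>2)"
    using assms by (intro sum_mono) (metis power2_abs power_mono)
  then show ?thesis
    by (simp add: power2_norm_restrict_vec)
qed

lemma mult_sum_abs_le_norm_restrict_vec:
  assumes "\<forall>i\<in>S. a \<le> \<bar>x $ i\<bar>"
  shows "a * (\<Sum>i\<in>S. \<bar>x $ i\<bar>) \<le> (norm (restrict_vec S x))\<^sup>2"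
proof -
  have "(\<Sum>i\<in>S. a * \<bar>x $ i\<bar>) \<le> (\<Sum>i\<in>S. (x $ i)\<^sup>2)"
  proof (intro sum_mono)
    fix i assume "i \<in> S"
    then have "a * \<bar>x $ i\<bar> \<le> \<bar>x $ i\<bar> * \<bar>x $ i\<bar>"
      using assms by (intro mult_right_mono) auto
    then show "a * \<bar>x $ i\<bar> \<le> (x $ i)\<^sup>2"
      by (simp add: power2_eq_square)
  qed
  then show ?thesis
    by (simp add: power2_norm_restrict_vec sum_distrib_left)
qed

lemma norm_restrict_vec_le_top:
  assumes "S \<subseteq> A" and "\<forall>i\<in>A - S. \<bar>x $ i\<bar> \<le> a"
  shows "(norm (restrict_vec A x))\<^sup>2 \<le> (norm (restrict_vec S x))\<^sup>2 + real (card (A - S)) * a\<^sup>2"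
proof -
  have "(\<Sum>i\<in>A - S. (x $ i)\<^sup>2) \<le> (\<Sum>i\<in>A - S. a\<^sup>2)"
    using assms(2) by (intro sum_mono) (metis abs_ge_zero power2_abs power_mono)
  moreover have "(\<Sum>i\<in>A. (x $ i)\<^sup>2) = (\<Sum>i\<in>A - S. (x $ i)\<^sup>2) + (\<Sum>i\<in>S. (x $ i)\<^sup>2)"
    using sum.subset_diff[OF assms(1)] by simp
  ultimately show ?thesis
    by (simp add: power2_norm_restrict_vec)
qed

lemma abs_le_kappa_mult:
  assumes "i \<in> supp x" and "j \<in> supp x"
  shows "\<bar>x $ i\<bar> \<le> kappa x * \<bar>x $ j\<bar>"
proof -
  have "finite {\<bar>x $ i\<bar> / \<bar>x $ j\<bar> | i j. i \<in> supp x \<and> j \<in> supp x}"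
    by (rule finite_subset[of _ "(\<lambda>(i, j). \<bar>x $ i\<bar> / \<bar>x $ j\<bar>) ` UNIV"]) auto
  then have "\<bar>x $ i\<bar> / \<bar>x $ j\<bar> \<le> kappa x"
    unfolding kappa_def using assms by (intro Max_ge) auto
  then show ?thesis
    using assms(2) by (simp add: supp_def divide_le_eq)
qed

lemma kappa_ge_one: "i \<in> supp x \<Longrightarrow> 1 \<le> kappa x"
  using abs_le_kappa_mult[of i x i] by (simp add: supp_def)

lemma powr_neg_three_halves: "0 < d \<Longrightarrow> d powr (-3/2) * sqrt d ^ 3 = 1"
  by (simp add: powr_minus_divide powr_half_sqrt[symmetric] powr_realpow[symmetric] powr_powr)

text \<open>Every entry on the support is at least a \<open>1/kappa x\<close> fraction of the largest one, so the SNR hypothesis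
  bounds the noise by any single entry.\<close>
lemma noise_le_entry:
  assumes rip: "rip_holds Phi s \<delta>" and "card (supp x) \<le> s" and "0 < \<delta>"
    and snr: "(kappa x)\<^sup>2 * \<delta> powr (-3/2) * (norm v)\<^sup>2 \<le> (norm (Phi *v x))\<^sup>2"
    and j: "j \<in> supp x"
  shows "(norm v)\<^sup>2 \<le> sqrt \<delta> ^ 3 * (1 + \<delta>) * real (card (supp x)) * (x $ j)\<^sup>2"
proof -
  define \<kappa> where "\<kappa> = kappa x"
  have "(norm x)\<^sup>2 = (\<Sum>i\<in>supp x. (x $ i)\<^sup>2)"
    by (metis power2_norm_restrict_vec restrict_vec_supp)
  also have "\<dots> \<le> (\<Sum>i\<in>supp x. \<kappa>\<^sup>2 * (x $ j)\<^sup>2)"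
    using abs_le_kappa_mult[OF _ j] kappa_ge_one[OF j]
    by (intro sum_mono) (metis \<kappa>_def abs_ge_zero power2_abs power_mono power_mult_distrib)
  finally have "(norm x)\<^sup>2 \<le> real (card (supp x)) * (\<kappa>\<^sup>2 * (x $ j)\<^sup>2)"
    by simp
  then have "(1 + \<delta>) * (norm x)\<^sup>2 \<le> (1 + \<delta>) * (real (card (supp x)) * (\<kappa>\<^sup>2 * (x $ j)\<^sup>2))"
    using \<open>0 < \<delta>\<close> by (intro mult_left_mono) auto
  with rip_upper[OF rip sparse_if_supp_subset[OF order_refl \<open>card (supp x) \<le> s\<close>]]
  have "(norm (Phi *v x))\<^sup>2 \<le> (1 + \<delta>) * (real (card (supp x)) * (\<kappa>\<^sup>2 * (x $ j)\<^sup>2))"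
    by (rule order_trans)
  with snr have "\<kappa>\<^sup>2 * (\<delta> powr (-3/2) * (norm v)\<^sup>2) \<le> \<kappa>\<^sup>2 * ((1 + \<delta>) * real (card (supp x)) * (x $ j)\<^sup>2)"
    unfolding \<kappa>_def by (simp add: algebra_simps)
  then have "\<delta> powr (-3/2) * (norm v)\<^sup>2 \<le> (1 + \<delta>) * real (card (supp x)) * (x $ j)\<^sup>2"
    using kappa_ge_one[OF j] by (simp add: \<kappa>_def)
  then have "sqrt \<delta> ^ 3 * (\<delta> powr (-3/2) * (norm v)\<^sup>2) \<le> sqrt \<delta> ^ 3 * ((1 + \<delta>) * real (card (supp x)) * (x $ j)\<^sup>2)"
    using \<open>0 < \<delta>\<close> by (intro mult_left_mono) auto
  then show ?thesis
    using powr_neg_three_halves[OF \<open>0 < \<delta>\<close>] by (simp add: mult.assoc[symmetric] mult.commute[of "sqrt \<delta> ^ 3"])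
qed

lemma estimation_error_arith:
  fixes e X W V PG G :: real
  assumes e: "0 < e" "e < 1/7" and nonneg: "0 \<le> X" "0 \<le> W" "0 \<le> V"
    and W: "(1 - e\<^sup>2) * W\<^sup>2 \<le> (PG + 2 * V)\<^sup>2" and PG: "PG\<^sup>2 \<le> (1 + e\<^sup>2) * G\<^sup>2"
    and G: "e * G\<^sup>2 \<le> 2 * X\<^sup>2" and V: "V\<^sup>2 \<le> e\<^sup>2 * (1 + e\<^sup>2) * X\<^sup>2"
  shows "e\<^sup>2 * W \<le> e * X"
proof -
  have "e * e \<le> 1/7 * (1/7)"
    using e by (intro mult_mono) auto
  then have e2: "e\<^sup>2 \<le> 1/49"
    by (simp add: power2_eq_square)
  have e4: "e\<^sup>2 * e\<^sup>2 \<le> e\<^sup>2 / 49"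
    using mult_left_mono[OF e2, of "e\<^sup>2"] by simp
  have "(PG + 2 * V)\<^sup>2 \<le> 2 * PG\<^sup>2 + 8 * V\<^sup>2"
    using zero_le_power2[of "PG - 2 * V"] by (simp add: power2_eq_square algebra_simps)
  with W PG V have "(1 - e\<^sup>2) * W\<^sup>2 \<le> 2 * (1 + e\<^sup>2) * G\<^sup>2 + 8 * e\<^sup>2 * (1 + e\<^sup>2) * X\<^sup>2"
    by linarith
  then have "e * ((1 - e\<^sup>2) * W\<^sup>2) \<le> e * (2 * (1 + e\<^sup>2) * G\<^sup>2 + 8 * e\<^sup>2 * (1 + e\<^sup>2) * X\<^sup>2)"
    using e by (intro mult_left_mono) auto
  also have "\<dots> = 2 * (1 + e\<^sup>2) * (e * G\<^sup>2) + 8 * e\<^sup>2 * (1 + e\<^sup>2) * (e * X\<^sup>2)"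
    by (simp add: algebra_simps)
  also have "\<dots> \<le> 2 * (1 + e\<^sup>2) * (2 * X\<^sup>2) + 8 * e\<^sup>2 * (1 + e\<^sup>2) * X\<^sup>2"
    using G e mult_left_le_one_le[of "X\<^sup>2" e] by (intro add_mono mult_left_mono) auto
  also have "\<dots> = (4 + 12 * e\<^sup>2 + 8 * (e\<^sup>2 * e\<^sup>2)) * X\<^sup>2"
    by (simp add: algebra_simps)
  also have "\<dots> \<le> (48/49) * (5 * X\<^sup>2)"
  proof -
    have "4 + 12 * e\<^sup>2 + 8 * (e\<^sup>2 * e\<^sup>2) \<le> 240/49"
      using e2 e4 by linarith
    from mult_right_mono[OF this zero_le_power2[of X]] show ?thesis
      by simp
  qed
  finally have "e * ((1 - e\<^sup>2) * W\<^sup>2) \<le> (48/49) * (5 * X\<^sup>2)" .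
  moreover have "(48/49) * (e * W\<^sup>2) \<le> (1 - e\<^sup>2) * (e * W\<^sup>2)"
    using e2 e by (intro mult_right_mono) auto
  moreover have "(1 - e\<^sup>2) * (e * W\<^sup>2) = e * ((1 - e\<^sup>2) * W\<^sup>2)"
    by simp
  ultimately have "e * W\<^sup>2 \<le> 5 * X\<^sup>2"
    by linarith
  then have "(e\<^sup>2 * W)\<^sup>2 \<le> e ^ 3 * (5 * X\<^sup>2)"
    using e mult_left_mono[of "e * W\<^sup>2" "5 * X\<^sup>2" "e ^ 3"]
    by (simp add: power2_eq_square power3_eq_cube mult.assoc mult.left_commute)
  also have "\<dots> = (5 * e) * (e * X)\<^sup>2"
    by (simp add: power2_eq_square power3_eq_cube)
  also have "\<dots> \<le> (e * X)\<^sup>2"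
    using e by (intro mult_left_le_one_le) simp_all
  finally show ?thesis
    by (rule power2_le_imp_le) (use e nonneg in simp)
qed

lemma correlation_arith:
  fixes e X W V PS ip :: real
  assumes e: "0 < e" "e < 1/7" and nonneg: "0 \<le> X" "0 \<le> V" "0 \<le> PS"
    and ip: "X\<^sup>2 - e\<^sup>2 * X * W - PS * V \<le> ip" and W: "e\<^sup>2 * W \<le> e * X"
    and PS: "PS\<^sup>2 \<le> (1 + e\<^sup>2) * X\<^sup>2" and V: "V\<^sup>2 \<le> e\<^sup>2 * (1 + e\<^sup>2) * X\<^sup>2"
  shows "(1 - 3 * e) * X\<^sup>2 \<le> ip"
proof -
  have "(PS * V)\<^sup>2 \<le> ((1 + e\<^sup>2) * X\<^sup>2) * (e\<^sup>2 * (1 + e\<^sup>2) * X\<^sup>2)"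
    unfolding power_mult_distrib using PS V by (intro mult_mono) auto
  also have "\<dots> = (e * (1 + e\<^sup>2) * X\<^sup>2)\<^sup>2"
    by (simp add: power2_eq_square algebra_simps)
  finally have "PS * V \<le> e * (1 + e\<^sup>2) * X\<^sup>2"
    by (rule power2_le_imp_le) (use e in simp)
  also have "\<dots> \<le> 2 * e * X\<^sup>2"
  proof -
    have "e * e \<le> 1"
      using e by (intro mult_le_one) auto
    then have "(1 + e\<^sup>2) * (e * X\<^sup>2) \<le> 2 * (e * X\<^sup>2)"
      using e by (intro mult_right_mono) (auto simp: power2_eq_square)
    then show ?thesis
      by (simp add: ac_simps)
  qed
  finally have "PS * V \<le> 2 * e * X\<^sup>2" .
  moreover have "e\<^sup>2 * X * W \<le> e * X\<^sup>2"
    using mult_left_mono[OF W nonneg(1)] by (simp add: power2_eq_square algebra_simps)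
  ultimately show ?thesis
    using ip by (simp add: algebra_simps)
qed

lemma decrease_arith:
  fixes e a g :: real
  assumes e: "0 < e" "e < 1/7" and "0 \<le> a" and g: "(1 - 3 * e) * a \<le> \<bar>g\<bar>"
  shows "(1 - 7 * e) * a\<^sup>2 \<le> g\<^sup>2 / (1 + e\<^sup>2)"
proof -
  have "(1 - 7 * e) * (1 + e\<^sup>2) \<le> (1 - 3 * e)\<^sup>2"
    using e by (simp add: power2_eq_square algebra_simps)
  then have "(1 - 7 * e) * (1 + e\<^sup>2) * a\<^sup>2 \<le> ((1 - 3 * e) * a)\<^sup>2"
    by (simp add: power_mult_distrib mult_right_mono)
  also have "\<dots> \<le> \<bar>g\<bar>\<^sup>2"
    using g e \<open>0 \<le> a\<close> by (intro power_mono) auto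
  finally show ?thesis
    by (simp add: pos_le_divide_eq add_pos_nonneg mult.commute mult.left_commute)
qed

locale omp_iteration =
  fixes Phi :: "real ^ 'n ^ 'm" and x :: "real ^ 'n" and v y :: "real ^ 'm"
    and K :: nat and \<delta> :: real and t :: "nat \<Rightarrow> 'n" and u :: "nat \<Rightarrow> real ^ 'n" and k :: nat
  assumes rip: "rip_holds Phi (2 * K) \<delta>"
    and card_supp: "card (supp x) = K"
    and measurement: "y = Phi *v x + v"
    and run: "omp_run Phi y K t u"
    and k_less: "k < K"
begin

lemma card_supp_union_le: "card (supp x \<union> t ` {1..k}) \<le> 2 * K"
  using card_Un_le[of "supp x" "t ` {1..k}"] card_image_le[of "{1..k}" t] card_supp k_less by simp

lemma residual_eq: "omp_res Phi y u k = Phi *v (x - u k) + v"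
  by (simp add: omp_res_def measurement matrix_vector_mult_diff_distrib)

lemma inner_residual_le_greedy:
  assumes "S \<subseteq> supp x - t ` {1..k}"
  shows "(Phi *v restrict_vec S x) \<bullet> omp_res Phi y u k
    \<le> \<bar>col Phi (t (Suc k)) \<bullet> omp_res Phi y u k\<bar> * (\<Sum>i\<in>S. \<bar>x $ i\<bar>)"
proof -
  let ?g = "\<bar>col Phi (t (Suc k)) \<bullet> omp_res Phi y u k\<bar>"
  have "(Phi *v restrict_vec S x) \<bullet> omp_res Phi y u k = (\<Sum>i\<in>S. x $ i * (col Phi i \<bullet> omp_res Phi y u k))"
    by (rule inner_matrix_restrict_vec)
  also have "\<dots> \<le> (\<Sum>i\<in>S. ?g * \<bar>x $ i\<bar>)"
  proof (rule sum_mono)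
    fix i assume "i \<in> S"
    have "x $ i * (col Phi i \<bullet> omp_res Phi y u k) \<le> \<bar>x $ i\<bar> * \<bar>col Phi i \<bullet> omp_res Phi y u k\<bar>"
      by (simp add: abs_mult[symmetric])
    also have "\<dots> \<le> \<bar>x $ i\<bar> * ?g"
      using \<open>i \<in> S\<close> assms by (intro mult_left_mono omp_run_greedy[OF run k_less]) auto
    also have "\<dots> = ?g * \<bar>x $ i\<bar>"
      by (rule mult.commute)
    finally show "x $ i * (col Phi i \<bullet> omp_res Phi y u k) \<le> ?g * \<bar>x $ i\<bar>" .
  qed
  also have "\<dots> = ?g * (\<Sum>i\<in>S. \<bar>x $ i\<bar>)"
    by (rule sum_distrib_left[symmetric])
  finally show ?thesis .
qed

lemma inner_residual_ge:
  assumes S: "S \<subseteq> supp x - t ` {1..k}"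
  defines "xS \<equiv> restrict_vec S x"
  shows "(norm xS)\<^sup>2 - \<delta> * norm xS * norm (x - u k) - norm (Phi *v xS) * norm v
    \<le> (Phi *v xS) \<bullet> omp_res Phi y u k"
proof -
  have u_supp: "supp (u k) \<subseteq> t ` {1..k}"
    using omp_run_supp[OF run, of k] k_less by simp
  have "xS \<bullet> (x - u k) = (\<Sum>i\<in>S. (x $ i)\<^sup>2)"
    unfolding xS_def inner_restrict_vec using S u_supp by (intro sum.cong) (auto simp: supp_def power2_eq_square)
  then have inner: "xS \<bullet> (x - u k) = (norm xS)\<^sup>2"
    by (simp add: xS_def power2_norm_restrict_vec)
  have "supp (x - u k) \<subseteq> supp x \<union> supp (u k)"
    by (auto simp: supp_def)
  then have "supp xS \<union> supp (x - u k) \<subseteq> supp x \<union> t ` {1..k}"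
    using u_supp by (auto simp: xS_def supp_restrict_vec)
  then have "card (supp xS \<union> supp (x - u k)) \<le> 2 * K"
    using card_mono[OF finite] card_supp_union_le le_trans by blast
  from rip_inner_lower[OF rip this]
  have "(norm xS)\<^sup>2 - \<delta> * norm xS * norm (x - u k) \<le> (Phi *v xS) \<bullet> (Phi *v (x - u k))"
    by (simp add: inner)
  moreover have "- (norm (Phi *v xS) * norm v) \<le> (Phi *v xS) \<bullet> v"
    using Cauchy_Schwarz_ineq2[of "Phi *v xS" v] by linarith
  ultimately show ?thesis
    by (simp add: residual_eq inner_add_right)
qed

lemma estimation_error_bound:
  "(1 - \<delta>) * (norm (x - u k))\<^sup>2 \<le> (norm (Phi *v restrict_vec (supp x - t ` {1..k}) x) + 2 * norm v)\<^sup>2"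
proof -
  let ?xT = "restrict_vec (t ` {1..k}) x"
  let ?PG = "norm (Phi *v restrict_vec (supp x - t ` {1..k}) x)"
  have "supp (x - u k) \<subseteq> supp x \<union> t ` {1..k}"
    using omp_run_supp[OF run, of k] k_less by (auto simp: supp_def)
  with card_supp_union_le have lower: "(1 - \<delta>) * (norm (x - u k))\<^sup>2 \<le> (norm (Phi *v (x - u k)))\<^sup>2"
    by (intro rip_lower[OF rip] sparse_if_supp_subset)
  have "supp ?xT \<subseteq> t ` {1..k}"
    by (simp add: supp_restrict_vec)
  from omp_run_res_le[OF run _ this] k_less
  have "norm (omp_res Phi y u k) \<le> norm (y - Phi *v ?xT)"
    by simp
  also have "y - Phi *v ?xT = Phi *v restrict_vec (supp x - t ` {1..k}) x + v"
    by (simp add: measurement diff_restrict_vec[symmetric] matrix_vector_mult_diff_distrib)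
  also have "norm \<dots> \<le> ?PG + norm v"
    by (rule norm_triangle_ineq)
  finally have "norm (omp_res Phi y u k) \<le> ?PG + norm v" .
  moreover have "norm (Phi *v (x - u k)) \<le> norm (omp_res Phi y u k) + norm v"
    using norm_triangle_ineq4[of "omp_res Phi y u k" v] by (simp add: residual_eq)
  ultimately have "norm (Phi *v (x - u k)) \<le> ?PG + 2 * norm v"
    by linarith
  then have "(norm (Phi *v (x - u k)))\<^sup>2 \<le> (?PG + 2 * norm v)\<^sup>2"
    by (simp add: power_mono)
  with lower show ?thesis
    by linarith
qed

context
  fixes S :: "'n set" and a :: real and j :: 'n
  assumes snr: "(kappa x)\<^sup>2 * \<delta> powr (-3/2) * (norm v)\<^sup>2 \<le> (norm (Phi *v x))\<^sup>2"
    and \<delta>_pos: "0 < \<delta>" and \<delta>_small: "sqrt \<delta> < 1/7"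
    and top_subset: "S \<subseteq> supp x - t ` {1..k}" and card_top: "sqrt \<delta> * real K \<le> real (card S)"
    and top_ge: "\<forall>i\<in>S. a \<le> \<bar>x $ i\<bar>" and rest_le: "\<forall>i\<in>supp x - t ` {1..k} - S. \<bar>x $ i\<bar> \<le> a"
    and entry: "j \<in> supp x" "a = \<bar>x $ j\<bar>"
begin

lemma top_entry_pos: "0 < a"
  using entry by (simp add: supp_def)

lemma top_norm_ge: "sqrt \<delta> * real K * a\<^sup>2 \<le> (norm (restrict_vec S x))\<^sup>2"
proof -
  have "sqrt \<delta> * real K * a\<^sup>2 \<le> real (card S) * a\<^sup>2"
    using card_top by (intro mult_right_mono) auto
  also have "\<dots> \<le> (norm (restrict_vec S x))\<^sup>2"
    using top_ge top_entry_pos by (intro card_mult_power2_le_norm_restrict_vec) auto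
  finally show ?thesis .
qed

lemma noise_le_top_norm: "(norm v)\<^sup>2 \<le> \<delta> * (1 + \<delta>) * (norm (restrict_vec S x))\<^sup>2"
proof -
  have "(norm v)\<^sup>2 \<le> sqrt \<delta> ^ 3 * (1 + \<delta>) * real K * a\<^sup>2"
    using noise_le_entry[OF rip _ \<delta>_pos snr entry(1)] card_supp entry(2) by simp
  also have "\<dots> = \<delta> * (1 + \<delta>) * (sqrt \<delta> * real K * a\<^sup>2)"
    using \<delta>_pos by (simp add: power3_eq_cube)
  also have "\<dots> \<le> \<delta> * (1 + \<delta>) * (norm (restrict_vec S x))\<^sup>2"
    using \<delta>_pos top_norm_ge by (intro mult_left_mono) auto
  finally show ?thesis .
qed

lemma remaining_norm_le_top_norm:
  "sqrt \<delta> * (norm (restrict_vec (supp x - t ` {1..k}) x))\<^sup>2 \<le> 2 * (norm (restrict_vec S x))\<^sup>2"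
proof -
  let ?X = "norm (restrict_vec S x)"
  have "card (supp x - t ` {1..k} - S) \<le> K"
    using card_supp by (metis Diff_subset card_mono finite order_trans)
  then have "real (card (supp x - t ` {1..k} - S)) * a\<^sup>2 \<le> real K * a\<^sup>2"
    by (intro mult_right_mono) auto
  then have "(norm (restrict_vec (supp x - t ` {1..k}) x))\<^sup>2 \<le> ?X\<^sup>2 + real K * a\<^sup>2"
    using norm_restrict_vec_le_top[OF top_subset rest_le] by linarith
  then have "sqrt \<delta> * (norm (restrict_vec (supp x - t ` {1..k}) x))\<^sup>2 \<le> sqrt \<delta> * ?X\<^sup>2 + sqrt \<delta> * real K * a\<^sup>2"
    using \<delta>_pos by (simp add: mult_left_mono distrib_left[symmetric] mult.assoc)
  moreover have "sqrt \<delta> * ?X\<^sup>2 \<le> ?X\<^sup>2"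
  proof (rule mult_left_le_one_le[OF zero_le_power2])
    show "0 \<le> sqrt \<delta>"
      using \<delta>_pos by simp
    show "sqrt \<delta> \<le> 1"
      using \<delta>_small by linarith
  qed
  ultimately show ?thesis
    using top_norm_ge by linarith
qed

lemma top_correlation_ge:
  "(1 - 3 * sqrt \<delta>) * (norm (restrict_vec S x))\<^sup>2 \<le> (Phi *v restrict_vec S x) \<bullet> omp_res Phi y u k"
proof -
  let ?xS = "restrict_vec S x" and ?x\<Gamma> = "restrict_vec (supp x - t ` {1..k}) x"
  have \<delta>_eq: "\<delta> = (sqrt \<delta>)\<^sup>2"
    using \<delta>_pos by simp
  have sparse: "sparse (2 * K) (restrict_vec A x)" if "A \<subseteq> supp x - t ` {1..k}" for A
    using that card_supp_union_le by (intro sparse_if_supp_subset[of _ "supp x \<union> t ` {1..k}"]) (auto simp: supp_restrict_vec)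
  have "(sqrt \<delta>)\<^sup>2 * norm (x - u k) \<le> sqrt \<delta> * norm ?xS"
  proof (rule estimation_error_arith)
    show "(1 - (sqrt \<delta>)\<^sup>2) * (norm (x - u k))\<^sup>2 \<le> (norm (Phi *v ?x\<Gamma>) + 2 * norm v)\<^sup>2"
      using estimation_error_bound \<delta>_eq by simp
    show "(norm (Phi *v ?x\<Gamma>))\<^sup>2 \<le> (1 + (sqrt \<delta>)\<^sup>2) * (norm ?x\<Gamma>)\<^sup>2"
      using rip_upper[OF rip sparse] \<delta>_eq by simp
    show "(norm v)\<^sup>2 \<le> (sqrt \<delta>)\<^sup>2 * (1 + (sqrt \<delta>)\<^sup>2) * (norm ?xS)\<^sup>2"
      using noise_le_top_norm \<delta>_eq by simp
  qed (use \<delta>_pos \<delta>_small remaining_norm_le_top_norm in auto)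
  then show ?thesis
  proof (rule correlation_arith[rotated 6])
    show "(norm ?xS)\<^sup>2 - (sqrt \<delta>)\<^sup>2 * norm ?xS * norm (x - u k) - norm (Phi *v ?xS) * norm v
        \<le> (Phi *v ?xS) \<bullet> omp_res Phi y u k"
      using inner_residual_ge[OF top_subset] \<delta>_eq by simp
    show "(norm (Phi *v ?xS))\<^sup>2 \<le> (1 + (sqrt \<delta>)\<^sup>2) * (norm ?xS)\<^sup>2"
      using rip_upper[OF rip sparse[OF top_subset]] \<delta>_eq by simp
    show "(norm v)\<^sup>2 \<le> (sqrt \<delta>)\<^sup>2 * (1 + (sqrt \<delta>)\<^sup>2) * (norm ?xS)\<^sup>2"
      using noise_le_top_norm \<delta>_eq by simp
  qed (use \<delta>_pos \<delta>_small in auto)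
qed

lemma greedy_correlation_ge_top_entry:
  "(1 - 3 * sqrt \<delta>) * a \<le> \<bar>col Phi (t (Suc k)) \<bullet> omp_res Phi y u k\<bar>"
proof -
  let ?A = "\<Sum>i\<in>S. \<bar>x $ i\<bar>"
  have "0 < sqrt \<delta> * real K"
    using \<delta>_pos k_less by simp
  then have "S \<noteq> {}"
    using card_top by auto
  then obtain i where "i \<in> S"
    by blast
  then have "0 < ?A"
    using top_ge top_entry_pos by (intro sum_pos2[of S]) auto
  have "(1 - 3 * sqrt \<delta>) * a * ?A \<le> (1 - 3 * sqrt \<delta>) * (norm (restrict_vec S x))\<^sup>2"
    using mult_sum_abs_le_norm_restrict_vec[OF top_ge] \<delta>_small by (simp add: mult.assoc mult_left_mono)
  also have "\<dots> \<le> \<bar>col Phi (t (Suc k)) \<bullet> omp_res Phi y u k\<bar> * ?A"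
    using top_correlation_ge inner_residual_le_greedy[OF top_subset] by linarith
  finally show ?thesis
    using \<open>0 < ?A\<close> by simp
qed

end

lemma greedy_correlation_ge_x_tau:
  assumes snr: "(kappa x)\<^sup>2 * \<delta> powr (-3/2) * (norm v)\<^sup>2 \<le> (norm (Phi *v x))\<^sup>2"
    and \<delta>_pos: "0 < \<delta>" and \<delta>_small: "sqrt \<delta> < 1/7"
    and k_le: "k \<le> K - nat \<lceil>sqrt \<delta> * real K\<rceil>"
  shows "(1 - 3 * sqrt \<delta>) * x_tau x K t k (sqrt \<delta>) \<le> \<bar>col Phi (t (Suc k)) \<bullet> omp_res Phi y u k\<bar>"
proof -
  let ?s = "nat \<lceil>sqrt \<delta> * real K\<rceil>" and ?\<Gamma> = "supp x - t ` {1..k}"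
  have "0 < sqrt \<delta> * real K"
    using \<delta>_pos k_less by simp
  then have "1 \<le> ?s"
    by (simp add: le_nat_iff)
  moreover have "?s \<le> card ?\<Gamma>"
  proof -
    have "sqrt \<delta> \<le> 1"
      using \<delta>_small by linarith
    then have "sqrt \<delta> * real K \<le> real K"
      using \<delta>_pos by (intro mult_left_le_one_le) auto
    then have "?s \<le> K"
      by simp
    moreover have "card (t ` {1..k}) \<le> k"
      using card_image_le[of "{1..k}" t] by simp
    ultimately show ?thesis
      using diff_card_le_card_Diff[of "t ` {1..k}" "supp x", OF finite] card_supp k_le by linarith
  qed
  ultimately obtain S where S: "S \<subseteq> ?\<Gamma>" "card S = ?s"
    "\<forall>i\<in>S. jth_largest x ?\<Gamma> ?s \<le> \<bar>x $ i\<bar>" "\<forall>i\<in>?\<Gamma> - S. \<bar>x $ i\<bar> \<le> jth_largest x ?\<Gamma> ?s"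
    "jth_largest x ?\<Gamma> ?s \<in> (\<lambda>i. \<bar>x $ i\<bar>) ` ?\<Gamma>"
    by (rule jth_largest_top_set[OF finite])
  then obtain j where j: "j \<in> supp x" "jth_largest x ?\<Gamma> ?s = \<bar>x $ j\<bar>"
    by auto
  have "sqrt \<delta> * real K \<le> real (card S)"
    using S(2) by (simp add: of_nat_ceiling)
  from greedy_correlation_ge_top_entry[OF snr \<delta>_pos \<delta>_small S(1) this S(3,4) j]
  show ?thesis
    by (simp add: x_tau_def)
qed

end

theorem proposition2:
  fixes Phi :: "real ^ 'n ^ 'm" and x :: "real ^ 'n" and v y :: "real ^ 'm"
    and K :: nat and \<delta> :: real and t :: "nat \<Rightarrow> 'n" and u :: "nat \<Rightarrow> real ^ 'n" and k :: nat
  assumes "K \<ge> 1"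
    and "is_rip_const Phi (2 * K) \<delta>" and "0 < \<delta>" and "\<delta> < 1"
    and "card (supp x) = K"
    and "y = Phi *v x + v"
    and "(norm (Phi *v x))\<^sup>2 \<ge> (kappa x)\<^sup>2 * \<delta> powr (-3/2) * (norm v)\<^sup>2"
    and "omp_run Phi y K t u"
    and "k \<le> K - nat \<lceil>sqrt \<delta> * real K\<rceil>" and "k < K"
  shows "(norm (omp_res Phi y u k))\<^sup>2 - (norm (omp_res Phi y u (k + 1)))\<^sup>2
           \<ge> (1 - 7 * sqrt \<delta>) * (x_tau x K t k (sqrt \<delta>))\<^sup>2"
proof -
  have rip: "rip_holds Phi (2 * K) \<delta>"
    using assms(2) by (simp add: is_rip_const_def)
  interpret omp_iteration Phi x v y K \<delta> t u k
    using rip assms(5,6,8,10) by unfold_locales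
  let ?g = "col Phi (t (Suc k)) \<bullet> omp_res Phi y u k"
  have decrease: "?g\<^sup>2 / (1 + \<delta>) \<le> (norm (omp_res Phi y u k))\<^sup>2 - (norm (omp_res Phi y u (k + 1)))\<^sup>2"
    using omp_res_decrease[OF assms(8) rip _ assms(10)] assms(1) by simp
  show ?thesis
  proof (cases "sqrt \<delta> < 1/7")
    case True
    with assms(3,7,9) have "(1 - 3 * sqrt \<delta>) * x_tau x K t k (sqrt \<delta>) \<le> \<bar>?g\<bar>"
      by (intro greedy_correlation_ge_x_tau)
    then have "(1 - 7 * sqrt \<delta>) * (x_tau x K t k (sqrt \<delta>))\<^sup>2 \<le> ?g\<^sup>2 / (1 + (sqrt \<delta>)\<^sup>2)"
      using assms(3) True by (intro decrease_arith) (simp_all add: x_tau_def jth_largest_nonneg)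
    with decrease assms(3) show ?thesis
      by simp
  next
    case False
    then have "(1 - 7 * sqrt \<delta>) * (x_tau x K t k (sqrt \<delta>))\<^sup>2 \<le> 0"
      by (intro mult_nonpos_nonneg) auto
    moreover have "0 \<le> ?g\<^sup>2 / (1 + \<delta>)"
      using assms(3) by simp
    ultimately show ?thesis
      using decrease by linarith
  qed
qed

end
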